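(* Let $p,q\ge 0$ with $p+q=1$ and $p\neq\frac12$. Let $\lambda$ be a continuous (atomless) Borel probability measure on $[0,1]$ whose distribution function $g_\lambda(x)=\lambda([0,x))$ is differentiable on $[0,1]$. Define $f(x)=2px+2q(1-x)$ and $G(x)=x\bigl(x+2q(1-x)\bigr)$, and set $g^{(1)}_\lambda=g_\lambda$ and $g^{(i)}_\lambda=G\circ g^{(i-1)}_\lambda$ for $i\ge 2$. For $n\in\mathbb{N}$ let $f^{(n)}_\lambda(x)=\prod_{i=1}^n f\bigl(g^{(i)}_\lambda(x)\bigr)$, $x\in[0,1]$. Then for every $n\in\mathbb{N}$ the function $f^{(n)}_\lambda:[0,1]\to\mathbb{R}_+$ is increasing if $p>\frac12$ and decreasing if $p<\frac12$.
   Context: The functions $f^{(n)}_\lambda$ are the Radon–Nikodym densities $d(V^n\lambda)/d\lambda$ of the iterates of the quadratic stochastic operator $(V\lambda)(A)=\int\int P(x,y,A)\,d\lambda(x)d\lambda(y)$, where for $x<y$, $P(x,y,\cdot)=q\delta_x+p\delta_y$, $P(y,x,\cdot)=P(x,y,\cdot)$ and $P(x,x,\cdot)=\delta_x$; only the explicit formulas above are needed. *)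

theory Defs
  imports "HOL-Probability.Probability"
begin

definition f_lin :: "real \<Rightarrow> real \<Rightarrow> real \<Rightarrow> real" where
  "f_lin p q x = 2 * p * x + 2 * q * (1 - x)"

definition G_map :: "real \<Rightarrow> real \<Rightarrow> real" where
  "G_map q x = x * (x + 2 * q * (1 - x))"

definition distr_fun :: "real measure \<Rightarrow> real \<Rightarrow> real" where
  "distr_fun M x = measure M {0..<x}"

definition g_iter :: "real \<Rightarrow> real measure \<Rightarrow> nat \<Rightarrow> real \<Rightarrow> real" where
  "g_iter q M i x = (G_map q ^^ (i - 1)) (distr_fun M x)"

definition f_n :: "real \<Rightarrow> real \<Rightarrow> real measure \<Rightarrow> nat \<Rightarrow> real \<Rightarrow> real" where
  "f_n p q M n x = (\<Prod>i=1..n. f_lin p q (g_iter q M i x))"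

end

theory Submission
  imports Defs
begin

text \<open>The iterates g_i are increasing with values in [0,1]: the distribution function
  is, and G maps [0,1] increasingly into itself. Each factor f(t) = 2q + 2(p - q)t of the
  product is then a nonnegative function of t \<in> [0,1], increasing for p > q and decreasing
  for p < q, and a product of nonnegative increasing (decreasing) functions is increasing
  (decreasing).\<close>

lemma antimono_on_prod:
  fixes f :: "'i \<Rightarrow> 'a::ord \<Rightarrow> 'b::linordered_idom"
  assumes "\<And>i. i \<in> I \<Longrightarrow> antimono_on S (f i)"
    and "\<And>i. i \<in> I \<Longrightarrow> f i \<in> S \<rightarrow> {0..}"
  shows "antimono_on S (\<lambda>x. \<Prod>i\<in>I. f i x)"
  using assms
  by (induction I rule: infinite_finite_induct)
     (auto simp: monotone_on_def Pi_iff prod_nonneg intro!: mult_mono)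

lemma funpow_image_subset: "f ` A \<subseteq> A \<Longrightarrow> (f ^^ k) ` A \<subseteq> A"
  by (induction k) auto

lemma mono_on_funpow:
  assumes "f ` A \<subseteq> A" and "mono_on A f"
  shows "mono_on A (f ^^ k)"
proof (induction k)
  case 0
  show ?case by (simp add: mono_on_ident)
next
  case (Suc k)
  have "mono_on A (f \<circ> (f ^^ k))"
    by (rule monotone_on_o[OF assms(2) Suc funpow_image_subset[OF assms(1)]])
  then show ?case by (simp add: comp_def)
qed

lemma G_map_image_unit:
  assumes "0 \<le> q" "q \<le> 1"
  shows "G_map q ` {0..1} \<subseteq> {0..1}"
proof
  fix y assume "y \<in> G_map q ` {0..1}"
  then obtain x where x: "0 \<le> x" "x \<le> 1" and y: "y = G_map q x" by auto
  have "1 - G_map q x = (1 - x) * (1 + x - 2 * q * x)"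
    by (simp add: G_map_def algebra_simps)
  moreover have "2 * q * x \<le> 2 * x"
    using assms x by (simp add: mult_right_mono)
  ultimately have "G_map q x \<le> 1"
    using x by (smt (verit) mult_nonneg_nonneg)
  moreover have "0 \<le> G_map q x"
    using assms x by (simp add: G_map_def)
  ultimately show "y \<in> {0..1}" using y by simp
qed

lemma mono_on_G_map:
  assumes "0 \<le> q" "q \<le> 1"
  shows "mono_on {0..1} (G_map q)"
proof (rule mono_onI)
  fix x y :: real assume "x \<in> {0..1}" "y \<in> {0..1}" "x \<le> y"
  have "0 \<le> (1 - 2 * q) * (x + y) + 2 * q"
  proof (cases "q \<le> 1/2")
    case True
    then show ?thesis using assms \<open>x \<in> {0..1}\<close> \<open>y \<in> {0..1}\<close> by simp
  next
    case False
    then have "(2 * q - 1) * (x + y) \<le> (2 * q - 1) * 2"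
      using \<open>x \<in> {0..1}\<close> \<open>y \<in> {0..1}\<close> by (intro mult_left_mono) auto
    then show ?thesis using assms by (simp add: algebra_simps)
  qed
  moreover have "G_map q y - G_map q x = (y - x) * ((1 - 2 * q) * (x + y) + 2 * q)"
    by (simp add: G_map_def algebra_simps)
  ultimately show "G_map q x \<le> G_map q y"
    using \<open>x \<le> y\<close> by (smt (verit) mult_nonneg_nonneg)
qed

lemma distr_fun_mem_unit: "prob_space M \<Longrightarrow> distr_fun M x \<in> {0..1}"
  by (simp add: distr_fun_def prob_space.prob_le_1)

lemma mono_distr_fun:
  assumes "finite_measure M" and "sets M = sets borel"
  shows "mono (distr_fun M)"
  unfolding distr_fun_def
  by (rule monoI, rule finite_measure.finite_measure_mono) (use assms in auto)

lemma g_iter_mem_unit: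
  "prob_space M \<Longrightarrow> 0 \<le> q \<Longrightarrow> q \<le> 1 \<Longrightarrow> g_iter q M i x \<in> {0..1}"
  unfolding g_iter_def
  using funpow_image_subset[OF G_map_image_unit] distr_fun_mem_unit by blast

lemma mono_g_iter:
  assumes "prob_space M" "sets M = sets borel" "0 \<le> q" "q \<le> 1"
  shows "mono (g_iter q M i)"
proof (rule monoI)
  fix x y :: real assume "x \<le> y"
  then show "g_iter q M i x \<le> g_iter q M i y"
    unfolding g_iter_def
    using assms mono_on_funpow[OF G_map_image_unit mono_on_G_map] distr_fun_mem_unit
      mono_distr_fun[OF prob_space.axioms(1)] by (meson monoD mono_onD)
qed

lemma f_lin_nonneg: "0 \<le> p \<Longrightarrow> 0 \<le> q \<Longrightarrow> t \<in> {0..1} \<Longrightarrow> 0 \<le> f_lin p q t"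
  by (simp add: f_lin_def)

lemma f_lin_eq: "f_lin p q t = 2 * q + 2 * (p - q) * t"
  by (simp add: f_lin_def algebra_simps)

lemma mono_f_lin: "q \<le> p \<Longrightarrow> mono (f_lin p q)"
  by (rule monoI) (simp add: f_lin_eq mult_left_mono)

lemma antimono_f_lin: "p \<le> q \<Longrightarrow> antimono (f_lin p q)"
  by (rule antimonoI) (simp add: f_lin_eq mult_left_mono_neg)

theorem proposition4p1:
  fixes p q :: real and M :: "real measure" and n :: nat
  assumes "p \<ge> 0" and "q \<ge> 0" and "p + q = 1" and "p \<noteq> 1/2"
    and "prob_space M" and "sets M = sets borel" and "measure M {0..1} = 1"
    and "\<And>x. measure M {x} = 0"
    and "distr_fun M differentiable_on {0..1}"
    and "n \<ge> 1"
  shows "(\<forall>x\<in>{0..1}. f_n p q M n x \<ge> 0)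
    \<and> (p > 1/2 \<longrightarrow> mono_on {0..1} (f_n p q M n))
    \<and> (p < 1/2 \<longrightarrow> antimono_on {0..1} (f_n p q M n))"
proof -
  have "q \<le> 1" using assms by linarith
  then have factor_nonneg: "0 \<le> f_lin p q (g_iter q M i x)" for i x
    using assms g_iter_mem_unit f_lin_nonneg by blast
  have g_mono: "mono (g_iter q M i)" for i
    using assms \<open>q \<le> 1\<close> by (intro mono_g_iter)
  have "mono_on {0..1} (\<lambda>x. f_lin p q (g_iter q M i x))" if "p > 1/2" for i
    using that assms by (auto intro!: mono_onI monoD[OF mono_f_lin] monoD[OF g_mono])
  then have "mono_on {0..1} (f_n p q M n)" if "p > 1/2"
    unfolding f_n_def using that factor_nonneg
    by (intro mono_on_prod) auto
  moreover have "antimono_on {0..1} (\<lambda>x. f_lin p q (g_iter q M i x))" if "p < 1/2" for i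
    using that assms by (auto intro!: monotone_onI antimonoD[OF antimono_f_lin] monoD[OF g_mono])
  then have "antimono_on {0..1} (f_n p q M n)" if "p < 1/2"
    unfolding f_n_def using that factor_nonneg
    by (intro antimono_on_prod) auto
  ultimately show ?thesis
    unfolding f_n_def using factor_nonneg by (simp add: prod_nonneg)
qed

end
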